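(* Suppose a graph $G$ has nonadjacent simplicial vertices $u$ and $v$ with $N(u)\cap N(v)\neq\emptyset$, and there exist distinct vertices $x\in N(u)$ and $y\in N(v)$ that are nonadjacent. Then $G$ is not well-bicovered.
   Context: All graphs are finite and simple; "subgraph" means induced subgraph. $N(w)$ is the open neighborhood of $w$. A vertex is simplicial if its neighborhood induces a complete graph. A graph is well-bicovered if every vertex-inclusion-maximal induced bipartite subgraph has the same order. *)

theory Defs
  imports Main
begin

definition simple_graph :: "'a set \<Rightarrow> ('a \<Rightarrow> 'a \<Rightarrow> bool) \<Rightarrow> bool" where
  "simple_graph V E \<longleftrightarrow> finite V \<and> (\<forall>x y. E x y \<longrightarrow> x \<in> V \<and> y \<in> V)
     \<and> (\<forall>x y. E x y \<longrightarrow> E y x) \<and> (\<forall>x. \<not> E x x)"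

definition nbhd :: "'a set \<Rightarrow> ('a \<Rightarrow> 'a \<Rightarrow> bool) \<Rightarrow> 'a \<Rightarrow> 'a set" where
  "nbhd V E w = {z \<in> V. E w z}"

definition simplicial :: "'a set \<Rightarrow> ('a \<Rightarrow> 'a \<Rightarrow> bool) \<Rightarrow> 'a \<Rightarrow> bool" where
  "simplicial V E w \<longleftrightarrow> (\<forall>a \<in> nbhd V E w. \<forall>b \<in> nbhd V E w. a \<noteq> b \<longrightarrow> E a b)"

definition independent :: "('a \<Rightarrow> 'a \<Rightarrow> bool) \<Rightarrow> 'a set \<Rightarrow> bool" where
  "independent E A \<longleftrightarrow> (\<forall>a \<in> A. \<forall>b \<in> A. \<not> E a b)"

definition induces_bipartite :: "'a set \<Rightarrow> ('a \<Rightarrow> 'a \<Rightarrow> bool) \<Rightarrow> 'a set \<Rightarrow> bool" where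
  "induces_bipartite V E S \<longleftrightarrow> S \<subseteq> V \<and>
     (\<exists>A B. A \<union> B = S \<and> A \<inter> B = {} \<and> independent E A \<and> independent E B)"

definition maximal_induced_bipartite :: "'a set \<Rightarrow> ('a \<Rightarrow> 'a \<Rightarrow> bool) \<Rightarrow> 'a set \<Rightarrow> bool" where
  "maximal_induced_bipartite V E S \<longleftrightarrow> induces_bipartite V E S \<and>
     (\<forall>T. induces_bipartite V E T \<and> S \<subseteq> T \<longrightarrow> T = S)"

definition well_bicovered :: "'a set \<Rightarrow> ('a \<Rightarrow> 'a \<Rightarrow> bool) \<Rightarrow> bool" where
  "well_bicovered V E \<longleftrightarrow> (\<forall>S T. maximal_induced_bipartite V E S \<and> maximal_induced_bipartite V E T
       \<longrightarrow> card S = card T)"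

end

theory Submission
  imports Defs
begin

text \<open>Let \<open>w\<close> be a common neighbour of \<open>u\<close> and \<open>v\<close>. The set \<open>{x, w, y}\<close> induces a path,
  so it extends to a maximal induced bipartite subgraph \<open>S\<close>. Since a bipartite graph meets
  the cliques \<open>N[u]\<close> and \<open>N[v]\<close> in at most two vertices, \<open>u, v \<notin> S\<close> and the only neighbours
  of \<open>u\<close> (resp. \<open>v\<close>) in \<open>S\<close> are \<open>x, w\<close> (resp. \<open>y, w\<close>). Putting \<open>u\<close> and \<open>v\<close> on the side
  of \<open>w\<close> in place of \<open>w\<close> gives an induced bipartite subgraph with one vertex more than \<open>S\<close>,
  and any maximal one containing it is larger than \<open>S\<close>.\<close>

definition clique :: "('a \<Rightarrow> 'a \<Rightarrow> bool) \<Rightarrow> 'a set \<Rightarrow> bool" where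
  "clique E K \<longleftrightarrow> (\<forall>a \<in> K. \<forall>b \<in> K. a \<noteq> b \<longrightarrow> E a b)"

lemma simplicial_closed_nbhd_clique:
  assumes "simple_graph V E" and "simplicial V E w"
  shows "clique E (insert w (nbhd V E w))"
  using assms unfolding simple_graph_def simplicial_def clique_def nbhd_def by blast

lemma induces_bipartite_subset: "induces_bipartite V E S \<Longrightarrow> S \<subseteq> V"
  unfolding induces_bipartite_def by blast

lemma induces_bipartite_clique_inter:
  assumes "induces_bipartite V E S" and "clique E K"
    and "a \<in> K \<inter> S" and "b \<in> K \<inter> S" and "a \<noteq> b"
  shows "K \<inter> S \<subseteq> {a, b}"
proof (rule subsetI, rule ccontr)
  fix c assume c: "c \<in> K \<inter> S" and "c \<notin> {a, b}"
  with assms(2-5) have triangle: "E a b" "E b c" "E a c" unfolding clique_def by auto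
  from assms(1) obtain A B where AB: "A \<union> B = S" "independent E A" "independent E B"
    unfolding induces_bipartite_def by blast
  have "a \<in> A \<or> a \<in> B" "b \<in> A \<or> b \<in> B" "c \<in> A \<or> c \<in> B"
    using AB(1) assms(3,4) c by auto
  then show False
    using AB(2,3) triangle unfolding independent_def by metis
qed

lemma simplicial_nbhd_inter_bipartite:
  assumes "simple_graph V E" and "simplicial V E u" and "induces_bipartite V E S"
    and "a \<in> nbhd V E u \<inter> S" and "b \<in> nbhd V E u \<inter> S" and "a \<noteq> b"
  shows "u \<notin> S" and "nbhd V E u \<inter> S \<subseteq> {a, b}"
proof -
  have "insert u (nbhd V E u) \<inter> S \<subseteq> {a, b}"
    using induces_bipartite_clique_inter[OF assms(3) simplicial_closed_nbhd_clique[OF assms(1,2)]]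
      assms(4-6) by blast
  moreover have "u \<noteq> a" "u \<noteq> b"
    using assms(1,4,5) unfolding simple_graph_def nbhd_def by auto
  ultimately show "u \<notin> S" and "nbhd V E u \<inter> S \<subseteq> {a, b}" by auto
qed

lemma induces_bipartite_obtain_side:
  assumes "induces_bipartite V E S" and "w \<in> S"
  obtains A B where "A \<union> B = S" "A \<inter> B = {}" "independent E A" "independent E B" "w \<in> B"
proof -
  obtain A B where AB: "A \<union> B = S" "A \<inter> B = {}" "independent E A" "independent E B"
    using assms(1) unfolding induces_bipartite_def by blast
  show thesis
  proof (cases "w \<in> B")
    case True
    with AB that show thesis by blast
  next
    case False
    with AB assms(2) that[of B A] show thesis by blast
  qed
qed

lemma induces_bipartite_add_to_side:
  assumes "\<And>a b. E a b \<Longrightarrow> E b a"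
    and "A \<union> B \<union> U \<subseteq> V" and "A \<inter> B = {}" and "A \<inter> U = {}"
    and "independent E A" and "independent E B" and "independent E U"
    and "\<forall>z \<in> U. \<forall>b \<in> B. \<not> E z b"
  shows "induces_bipartite V E (A \<union> B \<union> U)"
proof -
  have "independent E (B \<union> U)"
    using assms(1,6-8) unfolding independent_def by blast
  with assms(2-5) show ?thesis
    unfolding induces_bipartite_def by (intro conjI exI[of _ A] exI[of _ "B \<union> U"]) auto
qed

lemma simplicial_swap_bipartite:
  assumes G: "simple_graph V E" and "u \<in> V" and "v \<in> V" and "\<not> E u v"
    and "simplicial V E u" and "simplicial V E v"
    and S: "induces_bipartite V E S" and "{x, w, y} \<subseteq> S"
    and "x \<in> nbhd V E u" and "y \<in> nbhd V E v" and "w \<in> nbhd V E u \<inter> nbhd V E v"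
    and "x \<noteq> w" and "y \<noteq> w"
  shows "u \<notin> S" and "v \<notin> S" and "induces_bipartite V E ((S - {w}) \<union> {u, v})"
proof -
  have sym: "\<And>a b. E a b \<Longrightarrow> E b a" and irrefl: "\<And>a. \<not> E a a"
    using G unfolding simple_graph_def by auto
  have u_out: "u \<notin> S" and nbhd_u: "nbhd V E u \<inter> S \<subseteq> {x, w}"
    using simplicial_nbhd_inter_bipartite[OF G assms(5) S, of x w] assms(8,9,11,12) by auto
  have v_out: "v \<notin> S" and nbhd_v: "nbhd V E v \<inter> S \<subseteq> {y, w}"
    using simplicial_nbhd_inter_bipartite[OF G assms(6) S, of y w] assms(8,10,11,13) by auto
  show "u \<notin> S" "v \<notin> S" by (fact u_out, fact v_out)
  obtain A B where AB: "A \<union> B = S" "A \<inter> B = {}" "independent E A" "independent E B" "w \<in> B"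
    using induces_bipartite_obtain_side[OF S, of w] assms(8) by blast
  have "E x w" "E y w"
    using assms(5,6,9-13) unfolding simplicial_def by auto
  then have "x \<notin> B" "y \<notin> B"
    using AB(4,5) unfolding independent_def by auto
  have no_edge_to_B: "\<forall>z \<in> {u, v}. \<forall>b \<in> B - {w}. \<not> E z b"
  proof (intro ballI)
    fix z b assume z: "z \<in> {u, v}" and b: "b \<in> B - {w}"
    then have "b \<in> S - {x, y, w}" using AB(1) \<open>x \<notin> B\<close> \<open>y \<notin> B\<close> by blast
    then have "b \<notin> nbhd V E u" "b \<notin> nbhd V E v" using nbhd_u nbhd_v by blast+
    moreover have "b \<in> V" using \<open>b \<in> S - {x, y, w}\<close> induces_bipartite_subset[OF S] by blast
    ultimately show "\<not> E z b" using z unfolding nbhd_def by blast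
  qed
  have "induces_bipartite V E (A \<union> (B - {w}) \<union> {u, v})"
  proof (rule induces_bipartite_add_to_side[OF sym])
    show "A \<union> (B - {w}) \<union> {u, v} \<subseteq> V"
      using AB(1) induces_bipartite_subset[OF S] assms(2,3) by blast
    show "A \<inter> (B - {w}) = {}" "A \<inter> {u, v} = {}" using AB(1,2) u_out v_out by blast+
    show "independent E (B - {w})" using AB(4) unfolding independent_def by blast
    show "independent E {u, v}" using assms(4) sym irrefl unfolding independent_def by blast
  qed (use AB(3) no_edge_to_B in auto)
  moreover have "A \<union> (B - {w}) \<union> {u, v} = (S - {w}) \<union> {u, v}"
    using AB(1,2,5) by blast
  ultimately show "induces_bipartite V E ((S - {w}) \<union> {u, v})" by simp
qed

lemma maximal_induced_bipartite_exists:
  assumes "finite V" and "induces_bipartite V E S"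
  obtains T where "S \<subseteq> T" and "maximal_induced_bipartite V E T"
proof -
  let ?F = "{T. induces_bipartite V E T \<and> S \<subseteq> T}"
  have "?F \<subseteq> Pow V" by (auto dest: induces_bipartite_subset)
  then have "finite ?F" using assms(1) by (meson finite_Pow_iff finite_subset)
  moreover have "?F \<noteq> {}" using assms(2) by blast
  ultimately obtain T where T: "T \<in> ?F" "\<forall>T' \<in> ?F. T \<subseteq> T' \<longrightarrow> T = T'"
    by (meson finite_has_maximal)
  then have "maximal_induced_bipartite V E T"
    unfolding maximal_induced_bipartite_def by auto
  with T(1) show thesis using that by blast
qed

lemma well_bicovered_card_le:
  assumes "well_bicovered V E" and "finite V"
    and "maximal_induced_bipartite V E S" and "induces_bipartite V E T"
  shows "card T \<le> card S"
proof -
  obtain T' where "T \<subseteq> T'" and T': "maximal_induced_bipartite V E T'"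
    using maximal_induced_bipartite_exists[OF assms(2,4)] .
  moreover have "finite T'"
    using T' assms(2) unfolding maximal_induced_bipartite_def
    by (meson induces_bipartite_subset finite_subset)
  ultimately have "card T \<le> card T'" by (simp add: card_mono)
  also have "card T' = card S"
    using assms(1,3) T' unfolding well_bicovered_def by blast
  finally show ?thesis .
qed

theorem mainTheorem16:
  fixes V :: "'a set" and E :: "'a \<Rightarrow> 'a \<Rightarrow> bool" and u v x y :: 'a
  assumes "simple_graph V E"
    and "u \<in> V" and "v \<in> V" and "u \<noteq> v" and "\<not> E u v"
    and "simplicial V E u" and "simplicial V E v"
    and "nbhd V E u \<inter> nbhd V E v \<noteq> {}"
    and "x \<in> nbhd V E u" and "y \<in> nbhd V E v" and "x \<noteq> y" and "\<not> E x y"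
  shows "\<not> well_bicovered V E"
proof
  assume wb: "well_bicovered V E"
  have fin: "finite V" and irrefl: "\<And>a. \<not> E a a" and sym: "\<And>a b. E a b \<Longrightarrow> E b a"
    using assms(1) unfolding simple_graph_def by auto
  obtain w where w: "w \<in> nbhd V E u \<inter> nbhd V E v" using assms(8) by blast
  have "x \<noteq> w" "y \<noteq> w"
    using assms(6,7,9-12) w unfolding simplicial_def by (metis IntD1 IntD2 sym)+
  then have "induces_bipartite V E {x, w, y}"
    using assms(9,10,12) w irrefl sym unfolding induces_bipartite_def independent_def nbhd_def
    by (intro conjI exI[of _ "{x, y}"] exI[of _ "{w}"]) auto
  then obtain S where S: "{x, w, y} \<subseteq> S" "maximal_induced_bipartite V E S"
    using maximal_induced_bipartite_exists[OF fin] by blast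
  have S_bip: "induces_bipartite V E S" using S(2) unfolding maximal_induced_bipartite_def by blast
  note swap = simplicial_swap_bipartite[OF assms(1,2,3,5,6,7) S_bip S(1) assms(9,10) w
      \<open>x \<noteq> w\<close> \<open>y \<noteq> w\<close>]
  have "finite S" using fin induces_bipartite_subset[OF S_bip] finite_subset by blast
  moreover have "card S > 0" using S(1) \<open>finite S\<close> card_gt_0_iff by blast
  ultimately have "card ((S - {w}) \<union> {u, v}) = card S + 1"
    using S(1) swap(1,2) assms(4) by simp
  moreover have "card ((S - {w}) \<union> {u, v}) \<le> card S"
    using well_bicovered_card_le[OF wb fin S(2) swap(3)] .
  ultimately show False by simp
qed

end
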